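(* Fix $C>0$. (i) There exists $\varepsilon_0>0$ such that for all $0<\varepsilon<\varepsilon_0$, all $s>0$, all $\omega\in\mathcal C^{\rm opt}_{s,\varepsilon}$ and all $t_0\in[0,L(\omega)]$: if $\omega_2(t_0)\ge C\varepsilon$ then $\omega_2(t)\ge\tfrac C2\varepsilon$ for all $t\in[t_0,L(\omega)]$. (ii) There exists $\varepsilon_0>0$ such that for all $(\varepsilon,s)\in\mathcal I_{\varepsilon_0}$, all $\omega\in\mathcal C^{\rm opt}_{s,\varepsilon}$ and all $t_0\in[0,L(\omega)]$: if $\omega_2(t_0)\ge C\varepsilon$ then $\omega_1(t)\ge(\tfrac C4\varepsilon)^q$ for all $t\in[t_0,L(\omega)]$.
   Context: Fix an odd integer $b\geq5$, $q=b/2$. Let $P(x_1,x_2)=x_1^2-x_2^b$, $\widetilde P(x_1,x_2)=P(x_1,x_2)$ if $x_2\ge0$ and $x_1^2$ if $x_2<0$. Let $\mathcal M=(\mathbb{R}^3,\mathrm{span}\{X_1,X_2\},g)$ with $X_1=\partial_{x_1}$, $X_2=\partial_{x_2}+P(x_1,x_2)^2\partial_{x_3}$ orthonormal; $L_{\rm SR},d_{\rm SR}$ sub-Riemannian length and distance; $L(\cdot)$ Euclidean length. $\gamma(t)=(0,t,\tfrac{t^{2b+1}}{2b+1})$ for $t<0$, $\gamma(t)=(t^q,t,0)$ for $t\ge0$, $\gamma_{s,\varepsilon}=\gamma|_{[-s,\varepsilon]}$, $\pi(x_1,x_2,x_3)=(x_1,x_2)$. $\mathcal C^{\rm opt}_{s,\varepsilon}$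 is the set of arc-length parametrized $\omega:[0,T]\to\mathbb{R}^2$, $T=L(\omega)$, with $\omega=\pi\circ\eta$ for a horizontal $\eta$ from $\gamma(-s)$ to $\gamma(\varepsilon)$ with $L_{\rm SR}(\eta)=d_{\rm SR}(\gamma(-s),\gamma(\varepsilon))$, $\omega$ not the arc-length reparametrization of $\pi\circ\gamma_{s,\varepsilon}$. $\beta_\omega=\max|P\circ\omega|$, $\widetilde\beta_\omega=\max|\widetilde P\circ\omega|$. Standing choices: $\varepsilon_\star>0$ is fixed so that for every $0<\varepsilon<\varepsilon_\star$, $\gamma|_{[0,\varepsilon]}$ is the unique (up to reparametrization) length-minimizer between $(0,0,0)$ and $(\varepsilon^q,\varepsilon,0)$; $M>3q-1$ is fixed; for each $0<\varepsilon<\varepsilon_\star$, $\bar s(\varepsilon,M)>0$ is fixed so that for all $0<s<\bar s(\varepsilon,M)$ and all $\omega\in\mathcal C^{\rm opt}_{s,\varepsilon}$, $\beta_\omega,\widetilde\beta_\omega<\varepsilon^M$. For $\varepsilon_0>0$, $\mathcal I_{\varepsilon_0}=\{(\varepsilon,s)\in(0,\infty)^2:\ \varepsilon<\min\{\varepsilon_\star,\varepsilon_0\},\ s<\min\{\bar s(\varepsilon,M),\varepsilon^2\}\}$. *)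

theory Defs
  imports "HOL-Analysis.Analysis"
begin

type_synonym pt3 = "real \<times> real \<times> real"
type_synonym pt2 = "real \<times> real"

definition qexp :: "nat \<Rightarrow> real" where
  "qexp b = real b / 2"

definition Pf :: "nat \<Rightarrow> real \<Rightarrow> real \<Rightarrow> real" where
  "Pf b x1 x2 = x1^2 - x2^b"

definition Ptil :: "nat \<Rightarrow> real \<Rightarrow> real \<Rightarrow> real" where
  "Ptil b x1 x2 = (if x2 \<ge> 0 then Pf b x1 x2 else x1^2)"

definition proj :: "pt3 \<Rightarrow> pt2" where
  "proj p = (fst p, fst (snd p))"

definition curve_len :: "real \<Rightarrow> real \<Rightarrow> (real \<Rightarrow> 'a::real_normed_vector) \<Rightarrow> real" where
  "curve_len a b c = integral {a..b} (\<lambda>t. norm (vector_derivative c (at t within {a..b})))"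

text \<open>Horizontal curves on [a,T] for the frame X1 = d/dx1, X2 = d/dx2 + P^2 d/dx3:
  Lipschitz curves whose velocity is a.e. u1 X1 + u2 X2.\<close>
definition horizontal :: "nat \<Rightarrow> (real \<Rightarrow> pt3) \<Rightarrow> real \<Rightarrow> real \<Rightarrow> bool" where
  "horizontal b \<eta> a T \<longleftrightarrow> a \<le> T \<and> (\<exists>K. K-lipschitz_on {a..T} \<eta>) \<and>
     (\<exists>u1 u2 :: real \<Rightarrow> real. AE t in lborel. t \<in> {a..T} \<longrightarrow>
        (\<eta> has_vector_derivative
           (u1 t, u2 t, (Pf b (fst (\<eta> t)) (fst (snd (\<eta> t))))^2 * u2 t)) (at t within {a..T}))"

text \<open>Sub-Riemannian length: integral of sqrt(u1^2+u2^2), i.e. the Euclidean length of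
  the projection (X1, X2 orthonormal and projecting onto e1, e2).\<close>
definition sr_length :: "(real \<Rightarrow> pt3) \<Rightarrow> real \<Rightarrow> real \<Rightarrow> real" where
  "sr_length \<eta> a T = curve_len a T (proj \<circ> \<eta>)"

definition d_SR :: "nat \<Rightarrow> pt3 \<Rightarrow> pt3 \<Rightarrow> real" where
  "d_SR b p p' = Inf {sr_length \<eta> 0 T | \<eta> T. horizontal b \<eta> 0 T \<and> \<eta> 0 = p \<and> \<eta> T = p'}"

definition gam :: "nat \<Rightarrow> real \<Rightarrow> pt3" where
  "gam b t = (if t < 0 then (0, t, t^(2*b+1) / (2*b+1)) else (t powr qexp b, t, 0))"

definition minimizer :: "nat \<Rightarrow> (real \<Rightarrow> pt3) \<Rightarrow> real \<Rightarrow> real \<Rightarrow> bool" where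
  "minimizer b \<eta> a T \<longleftrightarrow> horizontal b \<eta> a T \<and> sr_length \<eta> a T = d_SR b (\<eta> a) (\<eta> T)"

definition reparam_of :: "(real \<Rightarrow> 'a) \<Rightarrow> real \<Rightarrow> (real \<Rightarrow> 'a) \<Rightarrow> real \<Rightarrow> real \<Rightarrow> bool" where
  "reparam_of \<eta> T c a a' \<longleftrightarrow> (\<exists>\<phi>. continuous_on {0..T} \<phi> \<and> mono_on {0..T} \<phi> \<and>
      \<phi> ` {0..T} = {a..a'} \<and> (\<forall>t\<in>{0..T}. \<eta> t = c (\<phi> t)))"

definition unique_min_gamma :: "nat \<Rightarrow> real \<Rightarrow> bool" where
  "unique_min_gamma b \<epsilon> \<longleftrightarrow> minimizer b (gam b) 0 \<epsilon> \<and>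
     (\<forall>\<eta> T. horizontal b \<eta> 0 T \<and> \<eta> 0 = gam b 0 \<and> \<eta> T = gam b \<epsilon> \<and>
        sr_length \<eta> 0 T = d_SR b (gam b 0) (gam b \<epsilon>) \<longrightarrow> reparam_of \<eta> T (gam b) 0 \<epsilon>)"

definition arclength :: "(real \<Rightarrow> pt2) \<Rightarrow> real \<Rightarrow> bool" where
  "arclength \<omega> T \<longleftrightarrow> 0 \<le> T \<and> (\<forall>t1\<in>{0..T}. \<forall>t2\<in>{0..T}. t1 \<le> t2 \<longrightarrow> curve_len t1 t2 \<omega> = t2 - t1)"

definition arclength_reparam :: "(real \<Rightarrow> pt2) \<Rightarrow> real \<Rightarrow> (real \<Rightarrow> pt2) \<Rightarrow> real \<Rightarrow> real \<Rightarrow> bool" where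
  "arclength_reparam \<omega> T c a a' \<longleftrightarrow> T = curve_len a a' c \<and>
     (\<forall>t\<in>{a..a'}. \<omega> (curve_len a t c) = c t)"

definition Copt :: "nat \<Rightarrow> real \<Rightarrow> real \<Rightarrow> (real \<Rightarrow> pt2) \<Rightarrow> real \<Rightarrow> bool" where
  "Copt b s \<epsilon> \<omega> T \<longleftrightarrow> arclength \<omega> T \<and> T = curve_len 0 T \<omega> \<and>
     (\<exists>\<eta>. horizontal b \<eta> 0 T \<and> \<eta> 0 = gam b (-s) \<and> \<eta> T = gam b \<epsilon> \<and>
        sr_length \<eta> 0 T = d_SR b (gam b (-s)) (gam b \<epsilon>) \<and>
        (\<forall>t\<in>{0..T}. \<omega> t = proj (\<eta> t))) \<and>
     \<not> arclength_reparam \<omega> T (proj \<circ> gam b) (-s) \<epsilon>"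

definition beta :: "nat \<Rightarrow> (real \<Rightarrow> pt2) \<Rightarrow> real \<Rightarrow> real" where
  "beta b \<omega> T = Sup ((\<lambda>t. \<bar>Pf b (fst (\<omega> t)) (snd (\<omega> t))\<bar>) ` {0..T})"

definition beta_til :: "nat \<Rightarrow> (real \<Rightarrow> pt2) \<Rightarrow> real \<Rightarrow> real" where
  "beta_til b \<omega> T = Sup ((\<lambda>t. \<bar>Ptil b (fst (\<omega> t)) (snd (\<omega> t))\<bar>) ` {0..T})"

definition Iset :: "real \<Rightarrow> (real \<Rightarrow> real \<Rightarrow> real) \<Rightarrow> real \<Rightarrow> real \<Rightarrow> (real \<times> real) set" where
  "Iset eps_star sbar M \<epsilon>0 = {(\<epsilon>, s). 0 < \<epsilon> \<and> 0 < s \<and> \<epsilon> < min eps_star \<epsilon>0 \<and> s < min (sbar \<epsilon> M) (\<epsilon>^2)}"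

end

theory Submission
  imports Defs
begin

text \<open>An optimal curve has length \<open>T = d\<^sub>S\<^sub>R(\<gamma>(-s), \<gamma>(\<epsilon>)) \<le> s + \<epsilon> + \<epsilon>\<^sup>q\<close>, because \<open>\<gamma>\<close> itself,
  suitably reparametrized, is a horizontal competitor; and since \<open>\<omega>\<close> is parametrized by arc
  length, \<open>\<omega>\<^sub>2\<close> is 1-Lipschitz.
  For (i): if \<open>\<omega>\<^sub>2\<close> fell from \<open>C\<epsilon>\<close> to below \<open>C\<epsilon>/2\<close> after \<open>t\<^sub>0\<close>, then \<open>\<omega>\<close> would climb from \<open>-s\<close>
  to \<open>C\<epsilon>\<close>, descend by \<open>C\<epsilon>/2\<close> and climb back to \<open>\<epsilon>\<close>, a length of more than
  \<open>s + \<epsilon> + C\<epsilon> > s + \<epsilon> + \<epsilon>\<^sup>q\<close> for small \<open>\<epsilon>\<close>.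
  For (ii): \<open>|\<omega>\<^sub>1\<^sup>2 - \<omega>\<^sub>2\<^sup>b| \<le> \<beta>\<^sub>\<omega> < \<epsilon>\<^sup>M\<close> with \<open>M > b\<close> and (i) force \<open>\<omega>\<^sub>1\<^sup>2 \<ge> (C\<epsilon>/2)\<^sup>b/2 \<ge> (C\<epsilon>/4)\<^sup>b\<close>
  after \<open>t\<^sub>0\<close>, and \<open>\<omega>\<^sub>1\<close> keeps the sign of \<open>\<omega>\<^sub>1(T) = \<epsilon>\<^sup>q > 0\<close> there.\<close>

section \<open>Real analysis\<close>

lemma AE_lborel_negligibleE:
  assumes "AE x in lborel. P x"
  obtains N where "negligible N" "\<And>x. x \<notin> N \<Longrightarrow> P x"
proof -
  obtain N where N: "{x \<in> space lborel. \<not> P x} \<subseteq> N" "emeasure lborel N = 0" "N \<in> sets lborel"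
    by (rule AE_E[OF assms])
  then have "negligible N"
    unfolding negligible_iff_null_sets by (auto intro: null_sets_completionI null_setsI)
  moreover have "P x" if "x \<notin> N" for x
    using N(1) that by auto
  ultimately show thesis
    using that by blast
qed

lemma integral_image_le_integral_deriv_bound:
  fixes g g' h :: "real \<Rightarrow> real"
  assumes S: "S \<in> sets lebesgue"
    and g': "\<And>x. x \<in> S \<Longrightarrow> (g has_real_derivative g' x) (at x within S)"
    and h: "h integrable_on S" and bound: "\<And>x. x \<in> S \<Longrightarrow> \<bar>g' x\<bar> \<le> h x"
  shows "(\<lambda>_. 1::real) integrable_on g ` S" "integral (g ` S) (\<lambda>_. 1::real) \<le> integral S h"
proof -
  \<comment> \<open>The change of variables theorem is stated for maps between spaces of type real^'n.\<close>
  let ?S = "vec ` S :: (real^1) set"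
  let ?G = "\<lambda>x::real^1. vec (g (x $ 1)) :: real^1"
  let ?G' = "\<lambda>x::real^1. (*\<^sub>R) (g' (x $ 1)) :: real^1 \<Rightarrow> real^1"
  have drop_vec: "(\<lambda>x::real^1. x $ 1) ` vec ` A = A" for A :: "real set"
    by (auto simp: image_image)
  have S': "?S \<in> sets lebesgue"
    by (auto intro: differentiable_image_in_sets_lebesgue [OF S] differentiable_vec)
  have G': "(?G has_derivative ?G' x) (at x within ?S)" if "x \<in> ?S" for x
  proof -
    from that obtain z where "z \<in> S" "x = vec z" by blast
    with g' have "(g has_derivative (\<lambda>y. y * g' z)) (at z within S)"
      unfolding has_field_derivative_def mult_commute_abs by blast
    from has_derivative_vector_1[where g'="\<lambda>_. g' z", OF this] show ?thesis using \<open>x = vec z\<close> by simp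
  qed
  have "((\<lambda>x. h (x $ 1)) \<circ> vec) integrable_on (\<lambda>x::real^1. x $ 1) ` ?S"
    using h by (simp add: drop_vec o_def)
  then have h': "(\<lambda>x. h (x $ 1)) integrable_on ?S"
    using has_integral_vec1_D integrable_on_def by blast
  have int_det: "(\<lambda>x. \<bar>det (matrix (?G' x))\<bar> * 1) integrable_on ?S"
  proof (rule measurable_bounded_by_integrable_imp_integrable_real[OF _ h' _ S'])
    show "(\<lambda>x. \<bar>det (matrix (?G' x))\<bar> * 1) \<in> borel_measurable (lebesgue_on ?S)"
      using borel_measurable_det_Jacobian[OF S' G'] by (simp add: borel_measurable_abs)
  qed (use bound in auto)
  have image: "(\<lambda>_. 1::real) integrable_on ?G ` ?S"
    "integral (?G ` ?S) (\<lambda>_. 1::real) \<le> integral ?S (\<lambda>x. \<bar>det (matrix (?G' x))\<bar> * 1)"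
    using integral_on_image_ubound_nonneg[OF _ G' int_det] by simp_all
  have GS: "?G ` ?S = vec ` (g ` S)" by (auto simp: image_image)
  from has_integral_vec1_I[OF integrable_integral[OF image(1)[unfolded GS]]]
  show "(\<lambda>_. 1::real) integrable_on g ` S"
    by (auto simp: drop_vec o_def)
  from has_integral_vec1_I[OF integrable_integral[OF int_det]]
  have "(\<lambda>x. \<bar>g' x\<bar>) integrable_on S"
    by (auto simp: drop_vec o_def)
  then have "integral S (\<lambda>x. \<bar>g' x\<bar>) \<le> integral S h"
    using h bound by (intro integral_le) auto
  with image(2) show "integral (g ` S) (\<lambda>_. 1::real) \<le> integral S h"
    unfolding GS integral_vec1_eq drop_vec by (simp add: o_def)
qed

lemma abs_diff_le_integral_image:
  fixes g :: "real \<Rightarrow> real"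
  assumes "a \<le> b" "continuous_on {a..b} g" "(\<lambda>_. 1::real) integrable_on g ` {a..b}"
  shows "\<bar>g b - g a\<bar> \<le> integral (g ` {a..b}) (\<lambda>_. 1)"
proof -
  have "connected (g ` {a..b})"
    using assms(2) by (intro connected_continuous_image) auto
  then have "{min (g a) (g b)..max (g a) (g b)} \<subseteq> g ` {a..b}"
    using \<open>a \<le> b\<close> by (intro connected_contains_Icc) (auto simp: min_def max_def)
  then have "integral {min (g a) (g b)..max (g a) (g b)} (\<lambda>_. 1::real) \<le> integral (g ` {a..b}) (\<lambda>_. 1)"
    using assms(3) by (intro integral_subset_le) auto
  then show ?thesis
    by (simp add: max_def min_def split: if_splits)
qed

lemma lipschitz_increment_le_integral:
  fixes g g' h :: "real \<Rightarrow> real"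
  assumes "a \<le> b" and N: "negligible N"
    and g': "\<And>x. x \<in> {a..b} - N \<Longrightarrow> (g has_real_derivative g' x) (at x within {a..b})"
    and bound: "\<And>x. x \<in> {a..b} - N \<Longrightarrow> \<bar>g' x\<bar> \<le> h x"
    and h: "h integrable_on {a..b}"
    and lip: "B-lipschitz_on {a..b} g"
  shows "\<bar>g b - g a\<bar> \<le> integral {a..b} h"
proof -
  define S where "S = {a..b} - N"
  have neg: "negligible ({a..b} - S)"
    using N by (rule negligible_subset) (auto simp: S_def)
  have "S \<in> sets lebesgue"
    using N by (simp add: S_def negligible_imp_sets sets.Diff)
  moreover have "(g has_real_derivative g' x) (at x within S)" if "x \<in> S" for x
    using g' that by (auto simp: S_def intro: DERIV_subset)
  moreover have "negligible {x \<in> S - {a..b}. f x \<noteq> 0}" "negligible {x \<in> {a..b} - S. f x \<noteq> 0}"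
    for f :: "real \<Rightarrow> real"
    using neg by (auto simp: S_def intro: negligible_subset)
  then have "h integrable_on S" "integral S h = integral {a..b} h"
    using h integrable_spike_set integral_spike_set by blast+
  ultimately have image_S: "(\<lambda>_. 1::real) integrable_on g ` S"
    "integral (g ` S) (\<lambda>_. 1::real) \<le> integral {a..b} h"
    using integral_image_le_integral_deriv_bound[of S g g' h] bound by (auto simp: S_def)
  have "negligible (g ` ({a..b} - S))"
  proof (rule negligible_locally_Lipschitz_image[OF _ neg])
    fix x assume "x \<in> {a..b} - S"
    then show "\<exists>T B. open T \<and> x \<in> T \<and> (\<forall>y \<in> ({a..b} - S) \<inter> T. norm (g y - g x) \<le> B * norm (y - x))"
      using lipschitz_onD[OF lip] by (intro exI[of _ UNIV] exI[of _ B]) (auto simp: dist_real_def)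
  qed simp
  then have image_spike: "negligible {y \<in> g ` {a..b} - g ` S. (1::real) \<noteq> 0}"
    by (rule negligible_subset) auto
  have image_spike': "negligible {y \<in> g ` S - g ` {a..b}. (1::real) \<noteq> 0}"
    by (intro empty_imp_negligible) (auto simp: S_def)
  have image_ab: "(\<lambda>_. 1::real) integrable_on g ` {a..b}"
    "integral (g ` {a..b}) (\<lambda>_. 1::real) = integral (g ` S) (\<lambda>_. 1)"
    using integrable_spike_set[OF image_S(1) image_spike' image_spike]
      integral_spike_set[OF image_spike image_spike'] by auto
  show ?thesis
    using abs_diff_le_integral_image[OF \<open>a \<le> b\<close> lipschitz_on_continuous_on[OF lip] image_ab(1)]
      image_S(2) image_ab(2) by simp
qed

lemma continuous_derivative_imp_lipschitz_on:
  fixes f f' :: "real \<Rightarrow> real"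
  assumes f': "\<And>x. (f has_real_derivative f' x) (at x)" and cont: "continuous_on {a..b} f'"
  shows "\<exists>L. L-lipschitz_on {a..b} f"
proof -
  obtain B where B: "\<And>x. x \<in> {a..b} \<Longrightarrow> \<bar>f' x\<bar> \<le> B"
    using compact_imp_bounded[OF compact_continuous_image[OF cont compact_Icc]]
    by (metis bounded_iff imageI real_norm_def)
  have "(max B 0)-lipschitz_on {a..b} f"
  proof (rule bounded_derivative_imp_lipschitz)
    show "(f has_derivative (*) (f' x)) (at x within {a..b})" for x
      using f' unfolding has_field_derivative_def by (rule has_derivative_at_withinI)
    show "onorm ((*) (f' x)) \<le> max B 0" if "x \<in> {a..b}" for x
      using B[OF that] by (intro onorm_le) (auto simp: abs_mult intro: mult_right_mono)
  qed auto
  then show ?thesis ..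
qed

lemma piecewise_C1_imp_lipschitz_on:
  fixes p q p' q' :: "real \<Rightarrow> real"
  assumes "\<And>x. (p has_real_derivative p' x) (at x)" "continuous_on {a..c} p'"
    and "\<And>x. (q has_real_derivative q' x) (at x)" "continuous_on {c..b} q'"
    and "p c = q c"
  shows "\<exists>L. L-lipschitz_on {a..b} (\<lambda>x. if x \<le> c then p x else q x)"
proof -
  obtain L1 L2 where "L1-lipschitz_on {a..c} p" "L2-lipschitz_on {c..b} q"
    using continuous_derivative_imp_lipschitz_on assms(1-4) by metis
  from lipschitz_on_concat_max[OF this \<open>p c = q c\<close>] show ?thesis ..
qed

lemma continuous_on_nonzero_pos:
  fixes f :: "real \<Rightarrow> real"
  assumes "continuous_on {a..b} f" "\<And>t. t \<in> {a..b} \<Longrightarrow> f t \<noteq> 0" "0 < f b" "t \<in> {a..b}"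
  shows "0 < f t"
proof (rule ccontr)
  assume "\<not> 0 < f t"
  then obtain x where "t \<le> x" "x \<le> b" "f x = 0"
    using IVT'[of f t 0 b] continuous_on_subset[OF assms(1), of "{t..b}"] assms(3,4) by auto
  with assms(2,4) show False by auto
qed

lemma has_real_derivative_shifted_power_div:
  "((\<lambda>t. (t - s)^(n+1) / real (n+1)) has_real_derivative (t - s)^n) (at t)"
  by (rule derivative_eq_intros refl | simp add: add.commute)+

lemma has_vector_derivative_fst:
  "(f has_vector_derivative (v :: 'a::real_normed_vector \<times> 'b::real_normed_vector)) F
    \<Longrightarrow> ((\<lambda>t. fst (f t)) has_vector_derivative fst v) F"
  unfolding has_vector_derivative_def by (drule has_derivative_fst) simp

lemma has_vector_derivative_snd:
  "(f has_vector_derivative (v :: 'a::real_normed_vector \<times> 'b::real_normed_vector)) F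
    \<Longrightarrow> ((\<lambda>t. snd (f t)) has_vector_derivative snd v) F"
  unfolding has_vector_derivative_def by (drule has_derivative_snd) simp

lemma vector_derivative_within_Icc_at:
  fixes c :: "real \<Rightarrow> 'a::euclidean_space"
  assumes "(c has_vector_derivative v) (at t)" and "a < b" "t \<in> {a..b}"
  shows "vector_derivative c (at t within {a..b}) = v"
  by (rule vector_derivative_within_closed_interval[OF assms(2,3) has_vector_derivative_at_within[OF assms(1)]])

section \<open>Curves in the plane and their lengths\<close>

lemma curve_len_nonneg: "0 \<le> curve_len a b c"
  unfolding curve_len_def
  by (cases "(\<lambda>t. norm (vector_derivative c (at t within {a..b}))) integrable_on {a..b}")
     (auto intro: integral_nonneg simp: not_integrable_integral)

lemma curve_len_cong:
  assumes "\<And>t. t \<in> {a..b} \<Longrightarrow> f t = g t"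
  shows "curve_len a b f = curve_len a b g"
  unfolding curve_len_def using assms
  by (intro integral_cong arg_cong[where f=norm] vector_derivative_cong_eq) (auto simp: always_eventually)

lemma arclength_snd_increment_le:
  fixes \<omega> :: "real \<Rightarrow> real \<times> real"
  assumes arc: "arclength \<omega> T" and lip: "K-lipschitz_on {0..T} \<omega>"
    and \<omega>': "AE t in lborel. t \<in> {0..T} \<longrightarrow> (\<omega> has_vector_derivative \<omega>' t) (at t within {0..T})"
    and t12: "0 \<le> t1" "t1 < t2" "t2 \<le> T"
  shows "\<bar>snd (\<omega> t2) - snd (\<omega> t1)\<bar> \<le> t2 - t1"
proof -
  obtain N where "negligible N"
    and N: "\<And>t. t \<notin> N \<Longrightarrow> t \<in> {0..T} \<Longrightarrow> (\<omega> has_vector_derivative \<omega>' t) (at t within {0..T})"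
    using AE_lborel_negligibleE[OF \<omega>'] by metis
  have sub: "{t1..t2} \<subseteq> {0..T}" using t12 by auto
  define speed where "speed t = norm (vector_derivative \<omega> (at t within {t1..t2}))" for t
  have len: "integral {t1..t2} speed = t2 - t1"
    using arc t12 unfolding arclength_def curve_len_def speed_def by auto
  then have int: "speed integrable_on {t1..t2}"
    using t12 not_integrable_integral by fastforce
  have lip_snd: "K-lipschitz_on {t1..t2} (\<lambda>t. snd (\<omega> t))"
  proof (rule lipschitz_onI)
    fix x y assume "x \<in> {t1..t2}" "y \<in> {t1..t2}"
    then have "dist (\<omega> x) (\<omega> y) \<le> K * dist x y"
      using lipschitz_onD[OF lip] sub by blast
    then show "dist (snd (\<omega> x)) (snd (\<omega> y)) \<le> K * dist x y"
      using dist_snd_le[of "\<omega> x" "\<omega> y"] by linarith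
  qed (rule lipschitz_on_nonneg[OF lip])
  have deriv: "((\<lambda>t. snd (\<omega> t)) has_real_derivative snd (\<omega>' t)) (at t within {t1..t2})"
    and bound: "\<bar>snd (\<omega>' t)\<bar> \<le> speed t" if "t \<in> {t1..t2} - N" for t
  proof -
    have \<omega>'t: "(\<omega> has_vector_derivative \<omega>' t) (at t within {t1..t2})"
      using N[of t] that sub by (auto intro: has_vector_derivative_within_subset)
    then show "((\<lambda>t. snd (\<omega> t)) has_real_derivative snd (\<omega>' t)) (at t within {t1..t2})"
      unfolding has_real_derivative_iff_has_vector_derivative by (rule has_vector_derivative_snd)
    have "vector_derivative \<omega> (at t within {t1..t2}) = \<omega>' t"
      by (rule vector_derivative_within_closed_interval[OF \<open>t1 < t2\<close> _ \<omega>'t]) (use that in auto)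
    then show "\<bar>snd (\<omega>' t)\<bar> \<le> speed t"
      using norm_snd_le[of "snd (\<omega>' t)" "fst (\<omega>' t)"] by (simp add: speed_def)
  qed
  show ?thesis
    using lipschitz_increment_le_integral[OF _ \<open>negligible N\<close> deriv bound int lip_snd] t12 len
    by simp
qed

lemma lipschitz_on_proj: "1-lipschitz_on S proj"
proof (rule lipschitz_onI)
  fix x y :: pt3
  have "dist (snd x) (snd y) \<ge> dist (fst (snd x)) (fst (snd y))"
    by (rule dist_fst_le)
  then show "dist (proj x) (proj y) \<le> 1 * dist x y"
    by (simp add: proj_def dist_Pair_Pair dist_prod_def[of x y] power_mono)
qed simp

lemma proj_has_vector_derivative:
  assumes "(\<eta> has_vector_derivative v) (at t within S)"
  shows "((proj \<circ> \<eta>) has_vector_derivative proj v) (at t within S)"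
  using has_vector_derivative_Pair[OF has_vector_derivative_fst[OF assms]
      has_vector_derivative_fst[OF has_vector_derivative_snd[OF assms]]]
  by (simp add: proj_def o_def)

section \<open>A competitor: the reparametrized curve \<open>\<gamma>\<close>\<close>

text \<open>The curve below is \<open>\<gamma>(t - s)\<close> for \<open>t \<le> s\<close> and \<open>\<gamma>((t - s)\<^sup>2)\<close> for \<open>t \<ge> s\<close>: a reparametrization
  of \<open>\<gamma>\<close> which is polynomial on each piece.\<close>

definition gam_reparam :: "nat \<Rightarrow> real \<Rightarrow> real \<Rightarrow> pt3" where
  "gam_reparam b s t = (if t \<le> s then (0, t - s, (t - s)^(2*b+1) / (2*b+1)) else ((t - s)^b, (t - s)^2, 0))"

lemma gam_reparam_has_vector_derivative_left:
  assumes "t < s"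
  shows "(gam_reparam b s has_vector_derivative (0, 1, (t - s)^(2*b))) (at t)"
proof (rule has_vector_derivative_transform_within_open[where S="{..<s}"])
  have "((\<lambda>t. (t - s)^(2*b+1) / (2*b+1)) has_real_derivative (t - s)^(2*b)) (at t)"
    by (rule has_real_derivative_shifted_power_div)
  moreover have "((\<lambda>t. t - s) has_real_derivative 1) (at t)"
    by (auto intro!: derivative_eq_intros)
  ultimately show "((\<lambda>t. (0, t - s, (t - s)^(2*b+1) / (2*b+1))) has_vector_derivative (0, 1, (t - s)^(2*b))) (at t)"
    by (intro has_vector_derivative_Pair has_vector_derivative_const)
       (simp_all add: has_real_derivative_iff_has_vector_derivative)
qed (use assms in \<open>auto simp: gam_reparam_def\<close>)

lemma gam_reparam_has_vector_derivative_right: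
  assumes "s < t"
  shows "(gam_reparam b s has_vector_derivative (b * (t - s)^(b-1), 2 * (t - s), 0)) (at t)"
proof (rule has_vector_derivative_transform_within_open[where S="{s<..}"])
  show "((\<lambda>t. ((t - s)^b, (t - s)^2, 0)) has_vector_derivative (b * (t - s)^(b-1), 2 * (t - s), 0)) (at t)"
    by (auto intro!: derivative_eq_intros simp: has_real_derivative_iff_has_vector_derivative[symmetric])
qed (use assms in \<open>auto simp: gam_reparam_def\<close>)

lemma gam_reparam_lipschitz:
  assumes "0 < b"
  shows "\<exists>K. K-lipschitz_on {0..T} (gam_reparam b s)"
proof -
  have split: "gam_reparam b s = (\<lambda>t. (if t \<le> s then 0 else (t - s)^b,
      if t \<le> s then t - s else (t - s)^2, if t \<le> s then (t - s)^(2*b+1) / (2*b+1) else 0))"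
    by (auto simp: gam_reparam_def fun_eq_iff)
  have "\<exists>L. L-lipschitz_on {0..T} (\<lambda>t. if t \<le> s then 0 else (t - s)^b)"
    by (rule piecewise_C1_imp_lipschitz_on[where p'="\<lambda>_. 0" and q'="\<lambda>t. b * (t - s)^(b-1)"])
       (use assms in \<open>auto intro!: derivative_eq_intros continuous_intros\<close>)
  then obtain L1 where L1: "L1-lipschitz_on {0..T} (\<lambda>t. if t \<le> s then 0 else (t - s)^b)" ..
  have "\<exists>L. L-lipschitz_on {0..T} (\<lambda>t. if t \<le> s then t - s else (t - s)^2)"
    by (rule piecewise_C1_imp_lipschitz_on[where p'="\<lambda>_. 1" and q'="\<lambda>t. 2 * (t - s)"])
       (auto intro!: derivative_eq_intros continuous_intros)
  then obtain L2 where L2: "L2-lipschitz_on {0..T} (\<lambda>t. if t \<le> s then t - s else (t - s)^2)" ..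
  have "\<exists>L. L-lipschitz_on {0..T} (\<lambda>t. if t \<le> s then (t - s)^(2*b+1) / (2*b+1) else 0)"
  proof (rule piecewise_C1_imp_lipschitz_on[where p'="\<lambda>t. (t - s)^(2*b)" and q'="\<lambda>_. 0"])
    show "((\<lambda>t. (t - s)^(2*b+1) / real (2*b+1)) has_real_derivative (t - s)^(2*b)) (at t)" for t
      by (rule has_real_derivative_shifted_power_div)
    show "continuous_on {0..s} (\<lambda>t. (t - s)^(2*b))"
      by (intro continuous_intros)
  qed (simp_all add: continuous_on_const)
  then obtain L3 where "L3-lipschitz_on {0..T} (\<lambda>t. if t \<le> s then (t - s)^(2*b+1) / (2*b+1) else 0)" ..
  then show ?thesis
    unfolding split using lipschitz_on_Pair[OF L1 lipschitz_on_Pair[OF L2]] by blast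
qed

lemma Pf_gam_reparam:
  "Pf b (fst (gam_reparam b s t)) (fst (snd (gam_reparam b s t))) = (if t \<le> s then -((t - s)^b) else 0)"
  by (simp add: gam_reparam_def Pf_def power_mult[symmetric] mult.commute)

lemma gam_reparam_horizontal:
  assumes "0 < b" and "0 \<le> T"
  shows "horizontal b (gam_reparam b s) 0 T"
proof -
  define u1 where "u1 t = (if t \<le> s then 0 else b * (t - s)^(b-1))" for t
  define u2 where "u2 t = (if t \<le> s then 1 else 2 * (t - s))" for t
  have deriv: "(gam_reparam b s has_vector_derivative (u1 t, u2 t,
      (Pf b (fst (gam_reparam b s t)) (fst (snd (gam_reparam b s t))))^2 * u2 t)) (at t within {0..T})"
    if "t \<noteq> s" for t
  proof (cases "t < s")
    case True
    then show ?thesis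
      using gam_reparam_has_vector_derivative_left[OF True, of b]
      by (auto simp: u1_def u2_def Pf_gam_reparam power_mult[symmetric] mult.commute
          intro: has_vector_derivative_at_within)
  next
    case False
    with that have "s < t" by simp
    then show ?thesis
      using gam_reparam_has_vector_derivative_right[OF \<open>s < t\<close>, of b]
      by (auto simp: u1_def u2_def Pf_gam_reparam intro: has_vector_derivative_at_within)
  qed
  have "AE t in lborel. t \<in> {0..T} \<longrightarrow> (gam_reparam b s has_vector_derivative (u1 t, u2 t,
      (Pf b (fst (gam_reparam b s t)) (fst (snd (gam_reparam b s t))))^2 * u2 t)) (at t within {0..T})"
    using AE_lborel_singleton[of s] by eventually_elim (simp add: deriv)
  then show ?thesis
    using gam_reparam_lipschitz[OF \<open>0 < b\<close>] \<open>0 \<le> T\<close> unfolding horizontal_def by blast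
qed

lemma gam_reparam_start: "0 \<le> s \<Longrightarrow> gam_reparam b s 0 = gam b (-s)"
  by (auto simp: gam_reparam_def gam_def)

lemma gam_reparam_end:
  assumes "0 < r"
  shows "gam_reparam b s (s + r) = gam b (r^2)"
proof -
  have "(r^2) powr qexp b = (r powr 2) powr qexp b"
    using assms by (simp add: powr_realpow)
  also have "\<dots> = r powr (2 * qexp b)"
    by (rule powr_powr)
  also have "\<dots> = r^b"
    using assms by (simp add: qexp_def powr_realpow)
  finally have "(r^2) powr qexp b = r^b" .
  then show ?thesis
    using assms by (simp add: gam_reparam_def gam_def)
qed

lemma integral_norm_velocity_le:
  assumes "0 < b" "0 \<le> r"
  shows "integral {s..s+r} (\<lambda>t. norm (b * (t - s)^(b-1), 2 * (t - s))) \<le> r^b + r^2"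
proof -
  have "((\<lambda>t. b * (t - s)^(b-1) + 2 * (t - s)) has_integral
      ((s + r - s)^b + (s + r - s)^2 - ((s - s)^b + (s - s)^2))) {s..s+r}"
    by (rule fundamental_theorem_of_calculus)
       (use assms in \<open>auto intro!: derivative_eq_intros
         simp: has_real_derivative_iff_has_vector_derivative[symmetric]\<close>)
  then have FTC: "((\<lambda>t. b * (t - s)^(b-1) + 2 * (t - s)) has_integral r^b + r^2) {s..s+r}"
    using assms by (simp add: power_0_left)
  have "(\<lambda>t. norm (b * (t - s)^(b-1), 2 * (t - s))) integrable_on {s..s+r}"
    by (intro integrable_continuous_interval continuous_intros)
  then show ?thesis
  proof (rule has_integral_le[OF integrable_integral FTC])
    show "norm (b * (t - s)^(b-1), 2 * (t - s)) \<le> b * (t - s)^(b-1) + 2 * (t - s)" if "t \<in> {s..s+r}" for t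
      using that norm_Pair_le[of "b * (t - s)^(b-1)" "2 * (t - s)"] by simp
  qed
qed

lemma sr_length_gam_reparam_le:
  assumes "0 < b" "0 \<le> s" "0 < r"
  shows "sr_length (gam_reparam b s) 0 (s + r) \<le> s + r^2 + r^b"
proof -
  define speed where "speed t = norm (vector_derivative (proj \<circ> gam_reparam b s) (at t within {0..s+r}))" for t
  define v where "v = (\<lambda>t. norm (b * (t - s)^(b-1), 2 * (t - s)))"
  have "speed t = 1" if "t \<in> {0..s} - {s}" for t
    using that vector_derivative_within_Icc_at[OF proj_has_vector_derivative[OF
        gam_reparam_has_vector_derivative_left[of t s b]], of 0 "s + r"] assms
    by (simp add: speed_def proj_def)
  moreover have "((\<lambda>_. 1) has_integral s) {0..s}"
    using has_integral_const_real[of "1::real" 0 s] assms by simp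
  ultimately have left: "(speed has_integral s) {0..s}"
    by (intro has_integral_spike_finite[of "{s}" _ speed "\<lambda>_. 1"]) auto
  have "speed t = v t" if "t \<in> {s..s+r} - {s}" for t
    using that vector_derivative_within_Icc_at[OF proj_has_vector_derivative[OF
        gam_reparam_has_vector_derivative_right[of s t b]], of 0 "s + r"] assms
    by (simp add: speed_def v_def proj_def)
  moreover have "v integrable_on {s..s+r}"
    unfolding v_def by (intro integrable_continuous_interval continuous_intros)
  ultimately have right: "(speed has_integral integral {s..s+r} v) {s..s+r}"
    by (intro has_integral_spike_finite[of "{s}" _ speed v]) auto
  have "(speed has_integral s + integral {s..s+r} v) {0..s+r}"
    by (rule has_integral_combine[OF _ _ left right]) (use assms in auto)
  then have "sr_length (gam_reparam b s) 0 (s + r) = s + integral {s..s+r} v"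
    unfolding sr_length_def curve_len_def speed_def[symmetric] by (rule integral_unique)
  moreover have "integral {s..s+r} v \<le> r^b + r^2"
    using integral_norm_velocity_le[of b r s] assms by (simp add: v_def)
  ultimately show ?thesis
    by simp
qed

lemma d_SR_gam_le:
  assumes "0 < b" "0 \<le> s" "0 < \<epsilon>"
  shows "d_SR b (gam b (-s)) (gam b \<epsilon>) \<le> s + \<epsilon> + \<epsilon> powr qexp b"
proof -
  define r where "r = sqrt \<epsilon>"
  have r: "0 < r" "r^2 = \<epsilon>" "r^b = \<epsilon> powr qexp b"
    using assms by (auto simp: r_def qexp_def powr_half_sqrt[symmetric] powr_powr powr_realpow[symmetric])
  have "sr_length (gam_reparam b s) 0 (s + r)
      \<in> {sr_length \<eta> 0 T |\<eta> T. horizontal b \<eta> 0 T \<and> \<eta> 0 = gam b (-s) \<and> \<eta> T = gam b \<epsilon>}"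
    using gam_reparam_horizontal[of b "s + r" s] gam_reparam_start[of s b] gam_reparam_end[of r b s] assms r
    by auto
  then have "d_SR b (gam b (-s)) (gam b \<epsilon>) \<le> sr_length (gam_reparam b s) 0 (s + r)"
    unfolding d_SR_def
    by (rule cInf_lower) (auto intro!: bdd_belowI[of _ 0] simp: sr_length_def curve_len_nonneg)
  also have "\<dots> \<le> s + \<epsilon> + \<epsilon> powr qexp b"
    using sr_length_gam_reparam_le[of b s r] assms r by simp
  finally show ?thesis .
qed

section \<open>Optimal curves\<close>

lemma Copt_endpoints:
  assumes "Copt b s \<epsilon> \<omega> T" "0 < s" "0 < \<epsilon>"
  shows "0 \<le> T" "\<omega> 0 = (0, -s)" "\<omega> T = (\<epsilon> powr qexp b, \<epsilon>)"
  using assms unfolding Copt_def arclength_def by (auto simp: gam_def proj_def)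

lemma Copt_lipschitz_ae_derivative:
  assumes "Copt b s \<epsilon> \<omega> T"
  obtains K \<omega>' where "K-lipschitz_on {0..T} \<omega>"
    "AE t in lborel. t \<in> {0..T} \<longrightarrow> (\<omega> has_vector_derivative \<omega>' t) (at t within {0..T})"
proof -
  obtain \<eta> where hor: "horizontal b \<eta> 0 T" and \<omega>: "\<And>t. t \<in> {0..T} \<Longrightarrow> \<omega> t = proj (\<eta> t)"
    using assms unfolding Copt_def by blast
  obtain K u1 u2 where K: "K-lipschitz_on {0..T} \<eta>"
    and \<eta>': "AE t in lborel. t \<in> {0..T} \<longrightarrow> (\<eta> has_vector_derivative
      (u1 t, u2 t, (Pf b (fst (\<eta> t)) (fst (snd (\<eta> t))))^2 * u2 t)) (at t within {0..T})"
    using hor unfolding horizontal_def by blast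
  have "K-lipschitz_on {0..T} (proj \<circ> \<eta>)"
    using lipschitz_on_compose[OF K lipschitz_on_proj] by simp
  then have "K-lipschitz_on {0..T} \<omega>"
    by (rule lipschitz_on_transform) (simp add: \<omega>)
  moreover have "AE t in lborel. t \<in> {0..T} \<longrightarrow> (\<omega> has_vector_derivative (u1 t, u2 t)) (at t within {0..T})"
    using \<eta>'
  proof eventually_elim
    case (elim t)
    show ?case
    proof
      assume t: "t \<in> {0..T}"
      have "((proj \<circ> \<eta>) has_vector_derivative (u1 t, u2 t)) (at t within {0..T})"
        using proj_has_vector_derivative[OF elim[rule_format, OF t]] by (simp add: proj_def)
      then show "(\<omega> has_vector_derivative (u1 t, u2 t)) (at t within {0..T})"
        by (rule has_vector_derivative_transform[OF t, rotated]) (simp add: \<omega>)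
    qed
  qed
  ultimately show thesis
    using that by simp
qed

lemma Copt_continuous_on:
  assumes "Copt b s \<epsilon> \<omega> T"
  shows "continuous_on {0..T} \<omega>"
  using Copt_lipschitz_ae_derivative[OF assms] lipschitz_on_continuous_on by metis

lemma Copt_snd_increment_le:
  assumes "Copt b s \<epsilon> \<omega> T" "0 \<le> t1" "t1 \<le> t2" "t2 \<le> T"
  shows "\<bar>snd (\<omega> t2) - snd (\<omega> t1)\<bar> \<le> t2 - t1"
proof (cases "t1 = t2")
  case False
  obtain K \<omega>' where "K-lipschitz_on {0..T} \<omega>"
    "AE t in lborel. t \<in> {0..T} \<longrightarrow> (\<omega> has_vector_derivative \<omega>' t) (at t within {0..T})"
    using Copt_lipschitz_ae_derivative[OF assms(1)] .
  moreover have "arclength \<omega> T"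
    using assms(1) unfolding Copt_def by blast
  ultimately show ?thesis
    using arclength_snd_increment_le False assms(2-4) by simp
qed simp

lemma Copt_length_le:
  assumes "Copt b s \<epsilon> \<omega> T" "0 < b" "0 < s" "0 < \<epsilon>"
  shows "T \<le> s + \<epsilon> + \<epsilon> powr qexp b"
proof -
  obtain \<eta> where "T = curve_len 0 T \<omega>" and "\<And>t. t \<in> {0..T} \<Longrightarrow> \<omega> t = proj (\<eta> t)"
    and "sr_length \<eta> 0 T = d_SR b (gam b (-s)) (gam b \<epsilon>)"
    using assms(1) unfolding Copt_def by blast
  then have "T = d_SR b (gam b (-s)) (gam b \<epsilon>)"
    using curve_len_cong[of 0 T \<omega> "proj \<circ> \<eta>"] by (simp add: sr_length_def)
  with d_SR_gam_le[of b s \<epsilon>] assms show ?thesis by simp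
qed

lemma powr_qexp_less_mult:
  assumes "4 \<le> b" "0 < \<epsilon>" "\<epsilon> < 1" "\<epsilon> < C"
  shows "\<epsilon> powr qexp b < C * \<epsilon>"
proof -
  have "\<epsilon> powr qexp b \<le> \<epsilon> powr 2"
    using assms by (intro powr_mono') (auto simp: qexp_def)
  also have "\<dots> = \<epsilon> * \<epsilon>"
    using assms by (simp add: power2_eq_square)
  also have "\<dots> < C * \<epsilon>"
    using assms by simp
  finally show ?thesis .
qed

lemma Copt_snd_stays_large:
  assumes Copt: "Copt b s \<epsilon> \<omega> T" and "0 < b" "0 < s" "0 < \<epsilon>"
    and small: "\<epsilon> powr qexp b < C * \<epsilon>"
    and t0: "t0 \<in> {0..T}" "C * \<epsilon> \<le> snd (\<omega> t0)" and t: "t \<in> {t0..T}"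
  shows "C / 2 * \<epsilon> \<le> snd (\<omega> t)"
proof (rule ccontr)
  assume "\<not> C / 2 * \<epsilon> \<le> snd (\<omega> t)"
  moreover have "snd (\<omega> t0) - snd (\<omega> 0) \<le> t0"
    and "snd (\<omega> t0) - snd (\<omega> t) \<le> t - t0" and "snd (\<omega> T) - snd (\<omega> t) \<le> T - t"
    using Copt_snd_increment_le[OF Copt] t0 t by (force simp: abs_le_iff)+
  ultimately have "s + \<epsilon> + C * \<epsilon> < T"
    using Copt_endpoints[OF Copt \<open>0 < s\<close> \<open>0 < \<epsilon>\<close>] t0 by simp
  with Copt_length_le[OF Copt \<open>0 < b\<close> \<open>0 < s\<close> \<open>0 < \<epsilon>\<close>] small show False
    by simp
qed

lemma abs_Pf_le_beta:
  assumes "continuous_on {0..T} \<omega>" "t \<in> {0..T}"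
  shows "\<bar>Pf b (fst (\<omega> t)) (snd (\<omega> t))\<bar> \<le> beta b \<omega> T"
proof -
  have "continuous_on {0..T} (\<lambda>t. \<bar>Pf b (fst (\<omega> t)) (snd (\<omega> t))\<bar>)"
    unfolding Pf_def by (intro continuous_intros assms(1))
  then have "bdd_above ((\<lambda>t. \<bar>Pf b (fst (\<omega> t)) (snd (\<omega> t))\<bar>) ` {0..T})"
    by (intro bounded_imp_bdd_above compact_imp_bounded compact_continuous_image) auto
  then show ?thesis
    unfolding beta_def using assms(2) by (intro cSup_upper) auto
qed

lemma half_power_le_sq:
  fixes a x y :: real
  assumes "0 < a" "a \<le> y" "\<bar>x^2 - y^b\<bar> \<le> a^b / 2" "0 < b"
  shows "(a / 2)^b \<le> x^2"
proof -
  have "(a / 2)^b * 2^1 \<le> (a / 2)^b * 2^b"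
    using assms by (intro mult_left_mono power_increasing) auto
  also have "\<dots> = a^b"
    by (simp add: power_mult_distrib[symmetric])
  finally have "(a / 2)^b \<le> a^b / 2" by simp
  also have "a^b \<le> y^b"
    using assms by (intro power_mono) auto
  then have "a^b / 2 \<le> x^2"
    using assms(3) by linarith
  finally show ?thesis .
qed

lemma powr_le_power_half:
  fixes c \<epsilon> M :: real
  assumes "b < M" "0 < c" "0 < \<epsilon>" "\<epsilon> < (c^b / 2) powr (1 / (M - b))"
  shows "\<epsilon> powr M \<le> (c * \<epsilon>)^b / 2"
proof -
  have "\<epsilon> powr (M - b) < ((c^b / 2) powr (1 / (M - b))) powr (M - b)"
    using assms by (intro powr_less_mono2) auto
  also have "\<dots> = c^b / 2"
    using assms by (simp add: powr_powr)
  finally have "\<epsilon>^b * \<epsilon> powr (M - b) \<le> \<epsilon>^b * (c^b / 2)"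
    using assms by (intro mult_left_mono) auto
  moreover have "\<epsilon> powr M = \<epsilon>^b * \<epsilon> powr (M - b)"
    using assms by (simp add: powr_add[symmetric] powr_realpow[symmetric])
  ultimately show ?thesis
    by (simp add: power_mult_distrib mult_ac)
qed

lemma powr_qexp_le_of_power_le_sq:
  fixes a x :: real
  assumes "0 < b" "0 \<le> a" "0 \<le> x" "a^b \<le> x^2"
  shows "a powr qexp b \<le> x"
proof (rule power2_le_imp_le)
  have "(a powr qexp b)^2 = a powr (2 * qexp b)"
    by (cases "a = 0") (simp_all add: powr_power)
  also have "\<dots> = a^b"
    using assms by (cases "a = 0") (auto simp: qexp_def powr_realpow)
  finally show "(a powr qexp b)^2 \<le> x^2"
    using assms by simp
qed (use assms in simp)

lemma Copt_fst_stays_large: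
  assumes Copt: "Copt b s \<epsilon> \<omega> T" and "0 < b" "0 < s" "0 < \<epsilon>" "0 < C"
    and "real b < M" "\<epsilon> < ((C / 2)^b / 2) powr (1 / (M - b))" "beta b \<omega> T < \<epsilon> powr M"
    and t0: "t0 \<in> {0..T}" and snd_large: "\<And>t. t \<in> {t0..T} \<Longrightarrow> C / 2 * \<epsilon> \<le> snd (\<omega> t)"
    and t: "t \<in> {t0..T}"
  shows "(C / 4 * \<epsilon>) powr qexp b \<le> fst (\<omega> t)"
proof -
  have beta: "beta b \<omega> T \<le> (C / 2 * \<epsilon>)^b / 2"
    using powr_le_power_half[of b M "C / 2" \<epsilon>] assms by simp
  have cont: "continuous_on {0..T} \<omega>"
    by (rule Copt_continuous_on[OF Copt])
  have sq: "(C / 4 * \<epsilon>)^b \<le> (fst (\<omega> x))^2" if "x \<in> {t0..T}" for x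
  proof -
    have "\<bar>(fst (\<omega> x))^2 - (snd (\<omega> x))^b\<bar> \<le> beta b \<omega> T"
      using abs_Pf_le_beta[OF cont, of x b] that t0 by (simp add: Pf_def)
    then show ?thesis
      using half_power_le_sq[of "C / 2 * \<epsilon>" "snd (\<omega> x)"] snd_large[OF that] beta \<open>0 < b\<close>
        \<open>0 < C\<close> \<open>0 < \<epsilon>\<close> by (simp add: mult_ac)
  qed
  have "0 < fst (\<omega> t)"
  proof (rule continuous_on_nonzero_pos[where f="\<lambda>t. fst (\<omega> t)"])
    show "continuous_on {t0..T} (\<lambda>t. fst (\<omega> t))"
      using t0 by (intro continuous_intros continuous_on_subset[OF cont]) auto
    have "0 < (C / 4 * \<epsilon>)^b"
      using \<open>0 < C\<close> \<open>0 < \<epsilon>\<close> by simp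
    then show "fst (\<omega> x) \<noteq> 0" if "x \<in> {t0..T}" for x
      using sq[OF that] by auto
    show "0 < fst (\<omega> T)"
      using Copt_endpoints[OF Copt \<open>0 < s\<close> \<open>0 < \<epsilon>\<close>] \<open>0 < \<epsilon>\<close> by simp
  qed (use t in auto)
  then show ?thesis
    using powr_qexp_le_of_power_le_sq[OF \<open>0 < b\<close> _ _ sq[OF t]] \<open>0 < C\<close> \<open>0 < \<epsilon>\<close> by simp
qed

theorem mainTheorem11:
  fixes b :: nat and C eps_star M :: real and sbar :: "real \<Rightarrow> real \<Rightarrow> real"
  assumes "odd b" and "b \<ge> 5" and "C > 0"
    and "eps_star > 0"
    and "\<forall>\<epsilon>. 0 < \<epsilon> \<and> \<epsilon> < eps_star \<longrightarrow> unique_min_gamma b \<epsilon>"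
    and "M > 3 * qexp b - 1"
    and "\<forall>\<epsilon>. 0 < \<epsilon> \<and> \<epsilon> < eps_star \<longrightarrow> sbar \<epsilon> M > 0 \<and>
           (\<forall>s \<omega> T. 0 < s \<and> s < sbar \<epsilon> M \<and> Copt b s \<epsilon> \<omega> T \<longrightarrow>
               beta b \<omega> T < \<epsilon> powr M \<and> beta_til b \<omega> T < \<epsilon> powr M)"
  shows "(\<exists>\<epsilon>0>0. \<forall>\<epsilon> s \<omega> T t0. 0 < \<epsilon> \<and> \<epsilon> < \<epsilon>0 \<and> 0 < s \<and> Copt b s \<epsilon> \<omega> T \<and>
             t0 \<in> {0..T} \<and> snd (\<omega> t0) \<ge> C * \<epsilon> \<longrightarrow>
             (\<forall>t\<in>{t0..T}. snd (\<omega> t) \<ge> C / 2 * \<epsilon>))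
       \<and> (\<exists>\<epsilon>0>0. \<forall>\<epsilon> s \<omega> T t0. (\<epsilon>, s) \<in> Iset eps_star sbar M \<epsilon>0 \<and> Copt b s \<epsilon> \<omega> T \<and>
             t0 \<in> {0..T} \<and> snd (\<omega> t0) \<ge> C * \<epsilon> \<longrightarrow>
             (\<forall>t\<in>{t0..T}. fst (\<omega> t) \<ge> (C / 4 * \<epsilon>) powr qexp b))"
proof -
  have "0 < b" "4 \<le> b" and "real b < M"
    using assms(2,6) by (auto simp: qexp_def)
  define \<epsilon>1 where "\<epsilon>1 = min 1 C"
  define \<epsilon>2 where "\<epsilon>2 = min \<epsilon>1 (((C / 2)^b / 2) powr (1 / (M - b)))"
  have "0 < \<epsilon>1" "0 < \<epsilon>2"
    using \<open>C > 0\<close> by (auto simp: \<epsilon>1_def \<epsilon>2_def)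
  have part_i: "C / 2 * \<epsilon> \<le> snd (\<omega> t)"
    if "0 < \<epsilon>" "\<epsilon> < \<epsilon>1" "0 < s" "Copt b s \<epsilon> \<omega> T" "t0 \<in> {0..T}" "C * \<epsilon> \<le> snd (\<omega> t0)" "t \<in> {t0..T}"
    for \<epsilon> s \<omega> T t0 t
    using Copt_snd_stays_large[OF that(4) \<open>0 < b\<close> that(3,1) _ that(5-7)]
      powr_qexp_less_mult[OF \<open>4 \<le> b\<close> that(1)] that(2) by (simp add: \<epsilon>1_def)
  have part_ii: "(C / 4 * \<epsilon>) powr qexp b \<le> fst (\<omega> t)"
    if "(\<epsilon>, s) \<in> Iset eps_star sbar M \<epsilon>2" "Copt b s \<epsilon> \<omega> T" "t0 \<in> {0..T}" "C * \<epsilon> \<le> snd (\<omega> t0)"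
      "t \<in> {t0..T}" for \<epsilon> s \<omega> T t0 t
  proof -
    have \<epsilon>: "0 < \<epsilon>" "\<epsilon> < \<epsilon>1" "\<epsilon> < ((C / 2)^b / 2) powr (1 / (M - b))" "0 < s"
      "beta b \<omega> T < \<epsilon> powr M"
      using that(1,2) assms(7) by (auto simp: Iset_def \<epsilon>2_def)
    show ?thesis
      using Copt_fst_stays_large[OF that(2) \<open>0 < b\<close> \<epsilon>(4,1) \<open>C > 0\<close> \<open>real b < M\<close> \<epsilon>(3,5) that(3) _ that(5)]
        part_i[OF \<epsilon>(1,2,4) that(2-4)] by blast
  qed
  show ?thesis
    using part_i part_ii \<open>0 < \<epsilon>1\<close> \<open>0 < \<epsilon>2\<close> by blast
qed

end
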